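(* Assume the $\mathfrak{c}^+$-enlarging property holds. For every sequence $\vec{\mathcal{U}}=\langle\mathcal{U}_s:s\in[\mathbb{N}]^{<\infty}\rangle$ of non-principal ultrafilters on $\mathbb{N}$ there exists a sequence $\vec{\alpha}=\langle\alpha_s:s\in[\mathbb{N}]^{<\infty}\rangle$ of nonstandard hypernatural numbers such that for every tree $T$ on $\mathbb{N}$: $T$ is a $\vec{\mathcal{U}}$-tree if and only if $T$ is an $\vec{\alpha}$-tree.
   Context: Setting (Alpha-Theory of Benci–Di Nasso): ZFC together with a new symbol $\alpha$ satisfying: ($\alpha$1) every sequence $\varphi=\langle\varphi_i:i\in\mathbb{N}\rangle$ has a unique ideal value $\varphi[\alpha]$; ($\alpha$2) if $\varphi[\alpha]=\psi[\alpha]$ and $f\circ\varphi$, $f\circ\psi$ make sense then $(f\circ\varphi)[\alpha]=(f\circ\psi)[\alpha]$; ($\alpha$3) constant real sequences $r$ have ideal value $r$, and $\langle i\rangle$ has ideal value $\alpha\notin\mathbb{N}$; ($\alpha$4) if $\vartheta_i=\{\varphi_i,\psi_i\}$ then $\vartheta[\alpha]=\{\varphi[\alpha],\psi[\alpha]\}$; ($\alpha$5) the constant sequence $\emptyset$ has ideal value $\emptyset$, and for nonempty $\psi_i$, $\psi[\alpha]=\{\vartheta[\alpha]:\vartheta_i\in\psi_i\ \forall i\}$. ${}^*A$ is the ideal value of the constant sequence $A$; elements of ${}^*\mathbb{N}\setminus\mathbb{N}$ are nonstandard hypernatural numbers. The $\mathfrak{c}^+$-enlarging property: for every set $A$ and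 every $\mathcal{F}\subseteq\wp(A)$ with $|\mathcal{F}|\le\mathfrak{c}$ and the finite intersection property, $\bigcap_{F\in\mathcal{F}}{}^*F\neq\emptyset$. For finite $s$ and $X\subseteq\mathbb{N}$, $s\sqsubseteq X$ means $s=\{j\in X:j\le i\}$ for some $i$. A tree on $\mathbb{N}$ is a nonempty $T\subseteq[\mathbb{N}]^{<\infty}$ closed under $\sqsubseteq$-initial segments; the stem $st(T)$ is the $\sqsubseteq$-maximal $s\in T$ comparable with all elements of $T$ (if it exists); $T/s=\{t\in T:s\sqsubseteq t\}$. A $\vec{\mathcal{U}}$-tree is a tree $T$ with a stem such that $\{n\in\mathbb{N}:s\cup\{n\}\in T\}\in\mathcal{U}_s$ for all $s\in T/st(T)$. An $\vec{\alpha}$-tree is a tree $T$ with a stem, $T/st(T)\neq\emptyset$, and $s\cup\{\alpha_s\}\in{}^*T$ for all $s\in T/st(T)$. *)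

theory Defs
  imports Main
begin

definition init_seg :: "nat set \<Rightarrow> nat set \<Rightarrow> bool" (infix "\<sqsubseteq>" 50) where
  "s \<sqsubseteq> X \<longleftrightarrow> finite s \<and> s \<subseteq> X \<and> (\<forall>j\<in>X. \<forall>k\<in>s. j \<le> k \<longrightarrow> j \<in> s)"

definition is_tree :: "nat set set \<Rightarrow> bool" where
  "is_tree T \<longleftrightarrow> T \<noteq> {} \<and> (\<forall>t\<in>T. finite t) \<and> (\<forall>t\<in>T. \<forall>s. s \<sqsubseteq> t \<longrightarrow> s \<in> T)"

definition comparable :: "nat set \<Rightarrow> nat set \<Rightarrow> bool" where
  "comparable s t \<longleftrightarrow> s \<sqsubseteq> t \<or> t \<sqsubseteq> s"

definition is_stem :: "nat set set \<Rightarrow> nat set \<Rightarrow> bool" where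
  "is_stem T s \<longleftrightarrow> s \<in> T \<and> (\<forall>t\<in>T. comparable s t)
     \<and> (\<forall>s'\<in>T. (\<forall>t\<in>T. comparable s' t) \<longrightarrow> s' \<sqsubseteq> s)"

definition has_stem :: "nat set set \<Rightarrow> bool" where
  "has_stem T \<longleftrightarrow> (\<exists>s. is_stem T s)"

definition stem :: "nat set set \<Rightarrow> nat set" where
  "stem T = (THE s. is_stem T s)"

definition subtree_above :: "nat set set \<Rightarrow> nat set \<Rightarrow> nat set set" (infixl "'/\<^sub>T" 70) where
  "T /\<^sub>T s = {t \<in> T. s \<sqsubseteq> t}"

definition ultrafilter_on_nat :: "nat set set \<Rightarrow> bool" where
  "ultrafilter_on_nat U \<longleftrightarrow> UNIV \<in> U \<and> {} \<notin> U
     \<and> (\<forall>A B. A \<in> U \<longrightarrow> B \<in> U \<longrightarrow> A \<inter> B \<in> U)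
     \<and> (\<forall>A B. A \<in> U \<longrightarrow> A \<subseteq> B \<longrightarrow> B \<in> U)
     \<and> (\<forall>A. A \<in> U \<or> - A \<in> U)"

definition nonprincipal_ultrafilter_on_nat :: "nat set set \<Rightarrow> bool" where
  "nonprincipal_ultrafilter_on_nat U \<longleftrightarrow> ultrafilter_on_nat U \<and> (\<forall>n. {n} \<notin> U)"

definition U_tree :: "(nat set \<Rightarrow> nat set set) \<Rightarrow> nat set set \<Rightarrow> bool" where
  "U_tree Us T \<longleftrightarrow> is_tree T \<and> has_stem T
     \<and> (\<forall>s \<in> T /\<^sub>T stem T. {n. s \<union> {n} \<in> T} \<in> Us s)"

text \<open>A nonstandard extension at the levels needed: hypernaturals form the type 'h
  (which plays the role of *N); e embeds N into *N (standard numbers);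
  starN A = *A for A \<subseteq> N; starF T = *T for T \<subseteq> [N]^{<\<infinity>},
  whose elements are (hyperfinite) sets of hypernaturals.\<close>
definition nonstandard_ext ::
  "(nat \<Rightarrow> 'h) \<Rightarrow> (nat set \<Rightarrow> 'h set) \<Rightarrow> (nat set set \<Rightarrow> 'h set set) \<Rightarrow> bool" where
  "nonstandard_ext e starN starF \<longleftrightarrow>
     inj e
     \<and> starN UNIV = UNIV
     \<and> (\<forall>A B. starN (A \<inter> B) = starN A \<inter> starN B)
     \<and> (\<forall>A. starN (- A) = - starN A)
     \<and> (\<forall>n. starN {n} = {e n})
     \<and> (\<forall>T s x. finite s \<longrightarrow>
           (e ` s \<union> {x} \<in> starF T \<longleftrightarrow> x \<in> starN {n. s \<union> {n} \<in> T}))"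

definition finite_intersection_property :: "'a set set \<Rightarrow> bool" where
  "finite_intersection_property F \<longleftrightarrow> (\<forall>G. G \<subseteq> F \<longrightarrow> finite G \<longrightarrow> G \<noteq> {} \<longrightarrow> \<Inter>G \<noteq> {})"

text \<open>c+-enlarging property, for A = N (every family of subsets of N has size \<le> c).\<close>
definition c_plus_enlarging :: "(nat set \<Rightarrow> 'h set) \<Rightarrow> bool" where
  "c_plus_enlarging starN \<longleftrightarrow>
     (\<forall>F :: nat set set. finite_intersection_property F \<longrightarrow> (\<Inter>A\<in>F. starN A) \<noteq> {})"

definition alpha_tree ::
  "(nat \<Rightarrow> 'h) \<Rightarrow> (nat set set \<Rightarrow> 'h set set) \<Rightarrow> (nat set \<Rightarrow> 'h) \<Rightarrow> nat set set \<Rightarrow> bool" where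
  "alpha_tree e starF \<alpha> T \<longleftrightarrow> is_tree T \<and> has_stem T \<and> T /\<^sub>T stem T \<noteq> {}
     \<and> (\<forall>s \<in> T /\<^sub>T stem T. e ` s \<union> {\<alpha> s} \<in> starF T)"

end

theory Submission
  imports Defs
begin

text \<open>Every ultrafilter U on N has the finite intersection property, so enlarging
  yields a hypernatural a in the star of every member of U; since *(-) commutes with
  complements, U is then exactly the ultrafilter {A. a \<in> *A} generated by a, and a is
  nonstandard when U is non-principal. Choosing such an a = \<alpha> s for each U_s, the
  condition {n. s \<union> {n} \<in> T} \<in> U_s becomes \<alpha> s \<in> *{n. s \<union> {n} \<in> T}, which by transfer
  is s \<union> {\<alpha> s} \<in> *T.\<close>

definition generated_ultrafilter :: "(nat set \<Rightarrow> 'h set) \<Rightarrow> 'h \<Rightarrow> nat set set" where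
  "generated_ultrafilter starN a = {A. a \<in> starN A}"

lemma ultrafilter_on_nat_Inter:
  assumes "ultrafilter_on_nat U" "finite G" "G \<subseteq> U"
  shows "\<Inter>G \<in> U"
  using assms(2,3)
proof (induction G rule: finite_induct)
  case empty
  then show ?case using assms(1) by (simp add: ultrafilter_on_nat_def)
next
  case (insert A G)
  then show ?case using assms(1) unfolding ultrafilter_on_nat_def by auto
qed

lemma ultrafilter_on_nat_fip:
  assumes "ultrafilter_on_nat U"
  shows "finite_intersection_property U"
  unfolding finite_intersection_property_def
proof (intro allI impI)
  fix G assume "G \<subseteq> U" "finite G" "G \<noteq> {}"
  then have "\<Inter>G \<in> U" using ultrafilter_on_nat_Inter assms by blast
  then show "\<Inter>G \<noteq> {}" using assms by (auto simp: ultrafilter_on_nat_def)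
qed

lemma ultrafilter_on_nat_Compl_iff:
  assumes "ultrafilter_on_nat U"
  shows "- A \<in> U \<longleftrightarrow> A \<notin> U"
proof
  assume "- A \<in> U"
  show "A \<notin> U"
  proof
    assume "A \<in> U"
    with \<open>- A \<in> U\<close> have "A \<inter> - A \<in> U" using assms unfolding ultrafilter_on_nat_def by blast
    then show False using assms by (simp add: ultrafilter_on_nat_def)
  qed
next
  assume "A \<notin> U"
  then show "- A \<in> U" using assms by (auto simp: ultrafilter_on_nat_def)
qed

lemma generated_ultrafilter_eq:
  assumes U: "ultrafilter_on_nat U"
    and compl: "\<And>A. starN (- A) = - starN A"
    and a: "a \<in> (\<Inter>A\<in>U. starN A)"
  shows "generated_ultrafilter starN a = U"
proof -
  have "A \<in> U" if "a \<in> starN A" for A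
  proof (rule ccontr)
    assume "A \<notin> U"
    then have "a \<in> starN (- A)" using a ultrafilter_on_nat_Compl_iff[OF U] by blast
    then show False using \<open>a \<in> starN A\<close> compl by simp
  qed
  then show ?thesis using a by (auto simp: generated_ultrafilter_def)
qed

lemma ultrafilter_generated_by_enlarging:
  assumes enlarging: "c_plus_enlarging starN" and U: "ultrafilter_on_nat U"
    and compl: "\<And>A. starN (- A) = - starN A"
  obtains a where "generated_ultrafilter starN a = U"
proof -
  have "finite_intersection_property U" using U by (rule ultrafilter_on_nat_fip)
  then obtain a where a: "a \<in> (\<Inter>A\<in>U. starN A)"
    using enlarging unfolding c_plus_enlarging_def by blast
  have "generated_ultrafilter starN a = U"
    by (rule generated_ultrafilter_eq[OF U]) (fact compl, fact a)
  then show ?thesis by (rule that)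
qed

lemma generator_nonstandard:
  assumes "nonprincipal_ultrafilter_on_nat (generated_ultrafilter starN a)"
    and "\<And>n. starN {n} = {e n}"
  shows "a \<notin> range e"
proof
  assume "a \<in> range e"
  then obtain n where "a = e n" by auto
  then have "{n} \<in> generated_ultrafilter starN a"
    using assms(2) by (simp add: generated_ultrafilter_def)
  then show False using assms(1) by (simp add: nonprincipal_ultrafilter_on_nat_def)
qed

lemma is_stem_unique:
  assumes "is_stem T s" "is_stem T s'"
  shows "s' = s"
  using assms unfolding is_stem_def init_seg_def by blast

lemma is_stem_stem:
  assumes "has_stem T"
  shows "is_stem T (stem T)"
proof -
  obtain s where s: "is_stem T s" using assms by (auto simp: has_stem_def)
  then have "stem T = s"
    unfolding stem_def by (rule the_equality) (rule is_stem_unique[OF s])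
  then show ?thesis using s by simp
qed

lemma stem_in_subtree_above:
  assumes "is_tree T" "has_stem T"
  shows "stem T \<in> T /\<^sub>T stem T"
proof -
  have "stem T \<in> T" using is_stem_stem[OF assms(2)] by (simp add: is_stem_def)
  moreover have "finite (stem T)" using calculation assms(1) by (simp add: is_tree_def)
  ultimately show ?thesis by (auto simp: subtree_above_def init_seg_def)
qed

lemma U_tree_iff_alpha_tree:
  assumes ext: "nonstandard_ext e starN starF" and T: "is_tree T"
    and gen: "\<And>s. finite s \<Longrightarrow> Us s = generated_ultrafilter starN (\<alpha> s)"
  shows "U_tree Us T \<longleftrightarrow> alpha_tree e starF \<alpha> T"
proof (cases "has_stem T")
  case False
  then show ?thesis by (simp add: U_tree_def alpha_tree_def)
next
  case True
  have "{n. s \<union> {n} \<in> T} \<in> Us s \<longleftrightarrow> e ` s \<union> {\<alpha> s} \<in> starF T"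
    if "s \<in> T /\<^sub>T stem T" for s
  proof -
    have "finite s" using that T by (simp add: subtree_above_def is_tree_def)
    then show ?thesis
      using gen ext by (simp add: nonstandard_ext_def generated_ultrafilter_def)
  qed
  then have "(\<forall>s \<in> T /\<^sub>T stem T. {n. s \<union> {n} \<in> T} \<in> Us s)
      \<longleftrightarrow> (\<forall>s \<in> T /\<^sub>T stem T. e ` s \<union> {\<alpha> s} \<in> starF T)"
    by (rule ball_cong[OF refl])
  moreover have "T /\<^sub>T stem T \<noteq> {}" using stem_in_subtree_above[OF T True] by blast
  ultimately show ?thesis using T True unfolding U_tree_def alpha_tree_def by simp
qed

theorem mainTheorem13:
  fixes e :: "nat \<Rightarrow> 'h" and starN :: "nat set \<Rightarrow> 'h set"
    and starF :: "nat set set \<Rightarrow> 'h set set"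
    and Us :: "nat set \<Rightarrow> nat set set"
  assumes "nonstandard_ext e starN starF"
    and "c_plus_enlarging starN"
    and "\<forall>s. finite s \<longrightarrow> nonprincipal_ultrafilter_on_nat (Us s)"
  shows "\<exists>\<alpha> :: nat set \<Rightarrow> 'h. (\<forall>s. finite s \<longrightarrow> \<alpha> s \<notin> range e)
           \<and> (\<forall>T. is_tree T \<longrightarrow> (U_tree Us T \<longleftrightarrow> alpha_tree e starF \<alpha> T))"
proof -
  have compl: "\<And>A. starN (- A) = - starN A" and singleton: "\<And>n. starN {n} = {e n}"
    using assms(1) by (simp_all add: nonstandard_ext_def)
  have "\<exists>a. finite s \<longrightarrow> generated_ultrafilter starN a = Us s" for s
  proof (cases "finite s")
    case True
    then have "ultrafilter_on_nat (Us s)"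
      using assms(3) by (simp add: nonprincipal_ultrafilter_on_nat_def)
    then show ?thesis using ultrafilter_generated_by_enlarging[OF assms(2) _ compl] by metis
  qed simp
  then obtain \<alpha> where gen: "\<And>s. finite s \<Longrightarrow> Us s = generated_ultrafilter starN (\<alpha> s)"
    by metis
  have "\<alpha> s \<notin> range e" if "finite s" for s
  proof (rule generator_nonstandard)
    show "nonprincipal_ultrafilter_on_nat (generated_ultrafilter starN (\<alpha> s))"
      unfolding gen[OF that, symmetric] using assms(3) that by simp
  qed (fact singleton)
  moreover have "U_tree Us T \<longleftrightarrow> alpha_tree e starF \<alpha> T" if "is_tree T" for T
    using U_tree_iff_alpha_tree[OF assms(1) that gen] .
  ultimately show ?thesis by blast
qed

end
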